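(* Let $G$ be an absolutely continuous distribution function on $[0,\infty)$ with density $g$ and hazard rate $r=g/(1-G)$. Let $\lambda_1,\dots,\lambda_n,\lambda^*_1,\dots,\lambda^*_n>0$, let $X_1,\dots,X_n$ be independent nonnegative random variables with $X_i$ having distribution function $G(\lambda_i x)$, and let $X^*_1,\dots,X^*_n$ be independent nonnegative random variables with $X^*_i$ having distribution function $G(\lambda^*_i x)$. Assume $x r(x)$ is increasing in $x$. (a) If $x^2r'(x)$ is decreasing in $x$ and $\sum_{i=1}^{j}\lambda^*_{(i)}\ge\sum_{i=1}^{j}\lambda_{(i)}$ for all $j=1,\dots,n$, then (i) $X_{1:n}\ge_{\rm hr}X^*_{1:n}$, and (ii) if moreover $r$ is decreasing, $X_{1:n}\ge_{\rm disp}X^*_{1:n}$. (b) If $x^2r'(x)$ is increasing in $x$ and $\sum_{i=j}^{n}\lambda^*_{(i)}\le\sum_{i=j}^{n}\lambda_{(i)}$ for all $j=1,\dots,n$, then (i) $X_{1:n}\le_{\rm hr}X^*_{1:n}$, and (ii) if moreover $r$ is decreasing, $X_{1:n}\le_{\rm disp}X^*_{1:n}$.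
   Context: $X_{1:n}=\min(X_1,\dots,X_n)$. For a vector $\boldsymbol{x}$, $x_{(1)}\le\dots\le x_{(n)}$ are its components in increasing order. For random variables $X,Y$ with distribution functions $F,H$, hazard rates $r_F,r_H$: $X\le_{\rm hr}Y$ means $r_F(x)\ge r_H(x)$ for all $x$; $X\le_{\rm disp}Y$ means $F^{-1}(\beta)-F^{-1}(\alpha)\le H^{-1}(\beta)-H^{-1}(\alpha)$ for all $0<\alpha\le\beta<1$. Increasing/decreasing mean nondecreasing/nonincreasing. *)

theory Defs
  imports "HOL-Probability.Probability"
begin

definition hazard_rate :: "(real \<Rightarrow> real) \<Rightarrow> real \<Rightarrow> real" where
  "hazard_rate F x = deriv F x / (1 - F x)"

definition hr_le :: "real measure \<Rightarrow> real measure \<Rightarrow> bool" where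
  "hr_le D1 D2 \<longleftrightarrow> (\<forall>x>0. hazard_rate (cdf D2) x \<le> hazard_rate (cdf D1) x)"

definition quantile :: "(real \<Rightarrow> real) \<Rightarrow> real \<Rightarrow> real" where
  "quantile F a = Inf {x. a \<le> F x}"

definition disp_le :: "real measure \<Rightarrow> real measure \<Rightarrow> bool" where
  "disp_le D1 D2 \<longleftrightarrow> (\<forall>a b. 0 < a \<longrightarrow> a \<le> b \<longrightarrow> b < 1 \<longrightarrow>
      quantile (cdf D1) b - quantile (cdf D1) a \<le> quantile (cdf D2) b - quantile (cdf D2) a)"

definition sorted_vals :: "nat \<Rightarrow> (nat \<Rightarrow> real) \<Rightarrow> real list" where
  "sorted_vals n l = sort (map l [0..<n])"

definition min_rv :: "nat \<Rightarrow> (nat \<Rightarrow> 'a \<Rightarrow> real) \<Rightarrow> 'a \<Rightarrow> real" where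
  "min_rv n X = (\<lambda>\<omega>. Min ((\<lambda>i. X i \<omega>) ` {..<n}))"

end

theory Submission
  imports Defs
begin

text \<open>
  The distribution function of \<open>X\<^sub>1\<^sub>:\<^sub>n\<close> is \<open>1 - exp (- \<Lambda> x)\<close> with
  \<open>\<Lambda> x = \<Sum>\<^sub>i \<Lambda>\<^sub>G (\<lambda>\<^sub>i x)\<close> and \<open>\<Lambda>\<^sub>G = - ln (1 - G)\<close>, so its hazard rate is
  \<open>\<Sum>\<^sub>i \<lambda>\<^sub>i r (\<lambda>\<^sub>i x) = (\<Sum>\<^sub>i h (\<lambda>\<^sub>i x)) / x\<close> with \<open>h u = u r u\<close>. The function \<open>h\<close> increases,
  and \<open>h' = r + u r'\<close> decreases (increases) whenever \<open>u\<^sup>2 r'\<close> does, so \<open>h\<close> is concave (convex).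
  Bounding \<open>h\<close> by its tangents at the sorted scale parameters and summing by parts turns the
  prefix (suffix) sum conditions into a pointwise comparison of the two hazard rates, which is
  the hazard rate order. If moreover \<open>r\<close> decreases, so does the larger hazard rate; started at
  their \<open>\<alpha>\<close>-quantiles, the larger cumulative hazard then grows at least as fast as the smaller
  one, which gives the dispersive order.
\<close>

section \<open>Majorization inequalities\<close>

lemma sum_mult_nonneg_of_prefix_sums_nonneg:
  fixes c d :: "nat \<Rightarrow> real"
  assumes c_nonneg: "\<forall>i<n. 0 \<le> c i"
    and c_antimono: "\<forall>i j. i \<le> j \<longrightarrow> j < n \<longrightarrow> c j \<le> c i"
    and prefix_nonneg: "\<forall>j\<le>n. 0 \<le> (\<Sum>i<j. d i)"
  shows "0 \<le> (\<Sum>i<n. c i * d i)"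
proof (cases n)
  case (Suc m)
  have "c k * (\<Sum>i<Suc k. d i) \<le> (\<Sum>i<Suc k. c i * d i)" if "k < n" for k
    using that
  proof (induction k)
    case (Suc k)
    have "c (Suc k) * (\<Sum>i<Suc k. d i) \<le> c k * (\<Sum>i<Suc k. d i)"
      using Suc.prems c_antimono prefix_nonneg[rule_format, of "Suc k"] by (intro mult_right_mono) auto
    then show ?case using Suc by (simp add: algebra_simps)
  qed simp
  from this[of m] have "c m * (\<Sum>i<n. d i) \<le> (\<Sum>i<n. c i * d i)" using Suc by simp
  moreover have "0 \<le> c m * (\<Sum>i<n. d i)"
    using Suc c_nonneg prefix_nonneg by (intro mult_nonneg_nonneg) auto
  ultimately show ?thesis by linarith
qed simp

lemma sum_mult_nonneg_of_suffix_sums_nonneg: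
  fixes c d :: "nat \<Rightarrow> real"
  assumes c_nonneg: "\<forall>i<n. 0 \<le> c i"
    and c_mono: "\<forall>i j. i \<le> j \<longrightarrow> j < n \<longrightarrow> c i \<le> c j"
    and suffix_nonneg: "\<forall>j<n. 0 \<le> (\<Sum>i\<in>{j..<n}. d i)"
  shows "0 \<le> (\<Sum>i<n. c i * d i)"
proof (cases n)
  case (Suc m)
  have "c k * (\<Sum>i\<in>{k..<n}. d i) \<le> (\<Sum>i\<in>{k..<n}. c i * d i)" if "k \<le> m" for k
    using that
  proof (induction k rule: inc_induct)
    case base
    then show ?case using Suc by simp
  next
    case (step k)
    have "c k * (\<Sum>i\<in>{Suc k..<n}. d i) \<le> c (Suc k) * (\<Sum>i\<in>{Suc k..<n}. d i)"
      using step.hyps Suc c_mono suffix_nonneg by (intro mult_right_mono) auto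
    moreover have "{k..<n} = insert k {Suc k..<n}" using step.hyps Suc by auto
    ultimately show ?case using step.IH by (simp add: algebra_simps)
  qed
  from this[of 0] have "c 0 * (\<Sum>i<n. d i) \<le> (\<Sum>i<n. c i * d i)"
    by (simp add: atLeast0LessThan)
  moreover have "0 \<le> c 0 * (\<Sum>i<n. d i)"
    using Suc c_nonneg suffix_nonneg[rule_format, of 0] by (simp add: atLeast0LessThan)
  ultimately show ?thesis by linarith
qed simp

lemma tangent_le_of_antimono_deriv:
  fixes h h' :: "real \<Rightarrow> real"
  assumes deriv: "\<forall>u>0. (h has_real_derivative h' u) (at u)"
    and anti: "antimono_on {0<..} h'"
    and "0 < a" "0 < b"
  shows "h' b * (b - a) \<le> h b - h a"
proof (cases a b rule: linorder_cases)
  case less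
  obtain z where z: "a < z" "z < b" "h b - h a = (b - a) * h' z"
    using MVT2[OF less, of h h'] deriv \<open>0 < a\<close> by force
  have "h' b \<le> h' z" using z \<open>0 < a\<close> by (intro monotone_onD[OF anti]) auto
  then show ?thesis using z less by (simp add: mult.commute mult_right_mono)
next
  case greater
  obtain z where z: "b < z" "z < a" "h a - h b = (a - b) * h' z"
    using MVT2[OF greater, of h h'] deriv \<open>0 < b\<close> by force
  have "h' z \<le> h' b" using z \<open>0 < b\<close> by (intro monotone_onD[OF anti]) auto
  then have "(a - b) * h' z \<le> (a - b) * h' b" using greater by (simp add: mult_left_mono)
  then show ?thesis using z by (simp add: algebra_simps)
qed simp

lemma tangent_le_of_mono_deriv:
  fixes h h' :: "real \<Rightarrow> real"
  assumes deriv: "\<forall>u>0. (h has_real_derivative h' u) (at u)"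
    and mono: "mono_on {0<..} h'"
    and "0 < a" "0 < b"
  shows "h' b * (a - b) \<le> h a - h b"
proof -
  have "\<forall>u>0. ((\<lambda>u. - h u) has_real_derivative - h' u) (at u)"
    using deriv by (auto intro: DERIV_minus)
  moreover have "antimono_on {0<..} (\<lambda>u. - h' u)"
    using mono by (auto simp: monotone_on_def)
  ultimately have "- h' b * (b - a) \<le> - h b - - h a"
    using assms(3,4) by (rule tangent_le_of_antimono_deriv)
  then show ?thesis by (simp add: algebra_simps)
qed

lemma sum_le_of_prefix_sums_le:
  fixes a b :: "nat \<Rightarrow> real" and h h' :: "real \<Rightarrow> real"
  assumes pos: "\<forall>i<n. 0 < a i \<and> 0 < b i"
    and b_sorted: "\<forall>i j. i \<le> j \<longrightarrow> j < n \<longrightarrow> b i \<le> b j"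
    and prefix: "\<forall>j\<le>n. (\<Sum>i<j. a i) \<le> (\<Sum>i<j. b i)"
    and deriv: "\<forall>u>0. (h has_real_derivative h' u) (at u)"
    and h_mono: "mono_on {0<..} h"
    and h'_anti: "antimono_on {0<..} h'"
  shows "(\<Sum>i<n. h (a i)) \<le> (\<Sum>i<n. h (b i))"
proof -
  have "0 \<le> (\<Sum>i<n. h' (b i) * (b i - a i))"
  proof (rule sum_mult_nonneg_of_prefix_sums_nonneg)
    show "\<forall>i<n. 0 \<le> h' (b i)"
      using pos deriv by (auto intro!: mono_on_imp_deriv_nonneg[OF h_mono] simp: interior_open)
    show "\<forall>i j. i \<le> j \<longrightarrow> j < n \<longrightarrow> h' (b j) \<le> h' (b i)"
      using pos b_sorted by (auto intro: monotone_onD[OF h'_anti])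
    show "\<forall>j\<le>n. 0 \<le> (\<Sum>i<j. b i - a i)"
      using prefix by (simp add: sum_subtractf)
  qed
  also have "\<dots> \<le> (\<Sum>i<n. h (b i) - h (a i))"
    using pos by (intro sum_mono tangent_le_of_antimono_deriv[OF deriv h'_anti]) auto
  finally show ?thesis by (simp add: sum_subtractf)
qed

lemma sum_le_of_suffix_sums_le:
  fixes a b :: "nat \<Rightarrow> real" and h h' :: "real \<Rightarrow> real"
  assumes pos: "\<forall>i<n. 0 < a i \<and> 0 < b i"
    and b_sorted: "\<forall>i j. i \<le> j \<longrightarrow> j < n \<longrightarrow> b i \<le> b j"
    and suffix: "\<forall>j<n. (\<Sum>i\<in>{j..<n}. b i) \<le> (\<Sum>i\<in>{j..<n}. a i)"
    and deriv: "\<forall>u>0. (h has_real_derivative h' u) (at u)"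
    and h_mono: "mono_on {0<..} h"
    and h'_mono: "mono_on {0<..} h'"
  shows "(\<Sum>i<n. h (b i)) \<le> (\<Sum>i<n. h (a i))"
proof -
  have "0 \<le> (\<Sum>i<n. h' (b i) * (a i - b i))"
  proof (rule sum_mult_nonneg_of_suffix_sums_nonneg)
    show "\<forall>i<n. 0 \<le> h' (b i)"
      using pos deriv by (auto intro!: mono_on_imp_deriv_nonneg[OF h_mono] simp: interior_open)
    show "\<forall>i j. i \<le> j \<longrightarrow> j < n \<longrightarrow> h' (b i) \<le> h' (b j)"
      using pos b_sorted by (auto intro: monotone_onD[OF h'_mono])
    show "\<forall>j<n. 0 \<le> (\<Sum>i\<in>{j..<n}. a i - b i)"
      using suffix by (simp add: sum_subtractf)
  qed
  also have "\<dots> \<le> (\<Sum>i<n. h (a i) - h (b i))"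
    using pos by (intro sum_mono tangent_le_of_mono_deriv[OF deriv h'_mono]) auto
  finally show ?thesis by (simp add: sum_subtractf)
qed

lemma antimono_x_deriv_of_antimono_sq_deriv:
  fixes f f' :: "real \<Rightarrow> real"
  assumes deriv: "\<forall>x>0. (f has_real_derivative f' x) (at x)"
    and anti: "antimono_on {0<..} (\<lambda>x. x\<^sup>2 * f' x)"
  shows "antimono_on {0<..} (\<lambda>x. f x + x * f' x)"
proof (rule monotone_onI)
  fix u v :: real assume "u \<in> {0<..}" "v \<in> {0<..}" "u \<le> v"
  then have uv: "0 < u" "u \<le> v" by auto
  define K where "K = u\<^sup>2 * f' u"
  have K_ge: "t\<^sup>2 * f' t \<le> K" if "u \<le> t" for t
    unfolding K_def using that uv by (intro monotone_onD[OF anti]) auto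
  have "f v + K / v \<le> f u + K / u"
  proof (rule DERIV_nonpos_imp_nonincreasing[OF uv(2)])
    fix t assume t: "u \<le> t" "t \<le> v"
    then have "((\<lambda>t. f t + K / t) has_real_derivative f' t - K / t\<^sup>2) (at t)"
      using deriv uv by (auto intro!: derivative_eq_intros simp: power2_eq_square)
    moreover have "f' t - K / t\<^sup>2 \<le> 0"
      using K_ge[OF t(1)] t uv by (simp add: field_simps)
    ultimately show "\<exists>y. ((\<lambda>t. f t + K / t) has_real_derivative y) (at t) \<and> y \<le> 0" by blast
  qed
  moreover have "v * f' v \<le> K / v"
    using K_ge[OF uv(2)] uv by (simp add: field_simps power2_eq_square)
  moreover have "K / u = u * f' u"
    using uv by (simp add: K_def power2_eq_square)
  ultimately show "f v + v * f' v \<le> f u + u * f' u" by linarith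
qed

lemma mono_x_deriv_of_mono_sq_deriv:
  fixes f f' :: "real \<Rightarrow> real"
  assumes deriv: "\<forall>x>0. (f has_real_derivative f' x) (at x)"
    and mono: "mono_on {0<..} (\<lambda>x. x\<^sup>2 * f' x)"
  shows "mono_on {0<..} (\<lambda>x. f x + x * f' x)"
proof -
  have "\<forall>x>0. ((\<lambda>x. - f x) has_real_derivative - f' x) (at x)"
    using deriv by (auto intro: DERIV_minus)
  moreover have "antimono_on {0<..} (\<lambda>x. x\<^sup>2 * - f' x)"
    using mono by (auto simp: monotone_on_def)
  ultimately have "antimono_on {0<..} (\<lambda>x. - f x + x * - f' x)"
    by (rule antimono_x_deriv_of_antimono_sq_deriv)
  show ?thesis
  proof (rule monotone_onI)
    fix x y :: real assume "x \<in> {0<..}" "y \<in> {0<..}" "x \<le> y"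
    then show "f x + x * f' x \<le> f y + y * f' y"
      using monotone_onD[OF \<open>antimono_on {0<..} (\<lambda>x. - f x + x * - f' x)\<close>] by force
  qed
qed

lemma length_sorted_vals [simp]: "length (sorted_vals n l) = n"
  unfolding sorted_vals_def by simp

lemma sorted_vals_nth_mono: "i \<le> j \<Longrightarrow> j < n \<Longrightarrow> sorted_vals n l ! i \<le> sorted_vals n l ! j"
  unfolding sorted_vals_def by (rule sorted_nth_mono) auto

lemma sorted_vals_nth_pos: "\<forall>i<n. 0 < l i \<Longrightarrow> i < n \<Longrightarrow> 0 < sorted_vals n l ! i"
  using nth_mem[of i "sorted_vals n l"] unfolding sorted_vals_def by auto

lemma sum_sorted_vals: "(\<Sum>i<n. f (sorted_vals n l ! i)) = (\<Sum>i<n. f (l i) :: real)"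
proof -
  have "(\<Sum>i<n. f (sorted_vals n l ! i)) = sum_list (map f (sorted_vals n l))"
    by (simp add: sum_list_sum_nth atLeast0LessThan)
  also have "\<dots> = sum_list (map f (map l [0..<n]))"
    unfolding sorted_vals_def by (metis mset_map mset_sort sum_mset_sum_list)
  also have "\<dots> = (\<Sum>i<n. f (l i))"
    by (simp add: sum_list_distinct_conv_sum_set atLeast0LessThan image_comp)
  finally show ?thesis .
qed

lemma sum_list_take_sorted_vals:
  "j \<le> n \<Longrightarrow> sum_list (take j (sorted_vals n l)) = (\<Sum>i<j. sorted_vals n l ! i)"
  by (simp add: sum_list_sum_nth atLeast0LessThan min_def)

lemma sum_list_drop_sorted_vals:
  "j \<le> n \<Longrightarrow> sum_list (drop j (sorted_vals n l)) = (\<Sum>i\<in>{j..<n}. sorted_vals n l ! i)"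
  by (simp add: sum_list_sum_nth atLeast0LessThan sum.atLeastLessThan_shift_0[of _ j n] ac_simps)

section \<open>Distributions given by a cumulative hazard\<close>

locale cumulative_hazard =
  fixes L H :: "real \<Rightarrow> real"
  assumes continuous: "continuous_on UNIV L"
    and nonpos_eq_0: "x \<le> 0 \<Longrightarrow> L x = 0"
    and unbounded: "\<exists>x. s \<le> L x"
    and has_derivative: "0 < x \<Longrightarrow> (L has_real_derivative H x) (at x)"
begin

lemma
  assumes "0 < s"
  shows quantile_pos: "0 < quantile L s"
    and at_quantile: "L (quantile L s) = s"
    and quantile_le: "s \<le> L x \<Longrightarrow> quantile L s \<le> x"
proof -
  define S where "S = {x. s \<le> L x}"
  have S_pos: "0 < x" if "x \<in> S" for x
    using that nonpos_eq_0[of x] \<open>0 < s\<close> unfolding S_def by force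
  then have "bdd_below S" by (meson bdd_belowI less_le_not_le)
  moreover have "closed S"
    unfolding S_def by (rule closed_Collect_le[OF continuous_on_const continuous])
  moreover have "S \<noteq> {}" using unbounded unfolding S_def by blast
  ultimately have in_S: "quantile L s \<in> S"
    unfolding quantile_def S_def[symmetric] by (intro closed_contains_Inf)
  then show "0 < quantile L s" by (rule S_pos)
  show le: "quantile L s \<le> x" if "s \<le> L x" for x
    unfolding quantile_def using \<open>bdd_below S\<close> that by (auto simp: S_def intro: cInf_lower)
  obtain y where "0 \<le> y" "y \<le> quantile L s" "L y = s"
    using IVT'[of L 0 s "quantile L s"] in_S \<open>0 < s\<close> nonpos_eq_0[of 0]
      continuous_on_subset[OF continuous] S_pos[OF in_S] unfolding S_def by force
  then show "L (quantile L s) = s" using le[of y] by simp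
qed

lemma hazard_rate_one_minus_exp: "0 < x \<Longrightarrow> hazard_rate (\<lambda>x. 1 - exp (- L x)) x = H x"
proof -
  assume "0 < x"
  then have "((\<lambda>x. 1 - exp (- L x)) has_real_derivative exp (- L x) * H x) (at x)"
    by (auto intro!: derivative_eq_intros has_derivative)
  then show ?thesis unfolding hazard_rate_def by (simp add: DERIV_imp_deriv)
qed

lemma quantile_one_minus_exp:
  assumes "0 < a" "a < 1"
  shows "quantile (\<lambda>x. 1 - exp (- L x)) a = quantile L (- ln (1 - a))"
proof -
  have "a \<le> 1 - exp (- L x) \<longleftrightarrow> exp (- L x) \<le> exp (ln (1 - a))" for x
    using assms by auto
  then have "a \<le> 1 - exp (- L x) \<longleftrightarrow> - ln (1 - a) \<le> L x" for x
    by (simp only: exp_le_cancel_iff) linarith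
  then show ?thesis unfolding quantile_def by simp
qed

end

lemma cumulative_hazard_le:
  assumes "cumulative_hazard L1 H1" "cumulative_hazard L2 H2"
    and le: "\<forall>x>0. H2 x \<le> H1 x" and "0 \<le> x"
  shows "L2 x \<le> L1 x"
proof -
  interpret L1: cumulative_hazard L1 H1 by fact
  interpret L2: cumulative_hazard L2 H2 by fact
  have "L1 0 - L2 0 \<le> L1 x - L2 x"
  proof (rule DERIV_nonneg_imp_increasing_open[of 0 x "\<lambda>x. L1 x - L2 x"])
    fix y :: real assume "0 < y" "y < x"
    then show "\<exists>d. ((\<lambda>x. L1 x - L2 x) has_real_derivative d) (at y) \<and> 0 \<le> d"
      using le by (intro exI[of _ "H1 y - H2 y"]) (auto intro: DERIV_diff L1.has_derivative L2.has_derivative)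
  qed (use \<open>0 \<le> x\<close> in \<open>auto intro!: continuous_on_diff continuous_on_subset[OF L1.continuous]
      continuous_on_subset[OF L2.continuous]\<close>)
  then show ?thesis using L1.nonpos_eq_0[of 0] L2.nonpos_eq_0[of 0] by simp
qed

lemma quantile_spacing_le:
  assumes "cumulative_hazard L1 H1" "cumulative_hazard L2 H2"
    and le: "\<forall>x>0. H2 x \<le> H1 x" and H1_anti: "antimono_on {0<..} H1"
    and "0 < s" "s \<le> t"
  shows "quantile L1 t - quantile L1 s \<le> quantile L2 t - quantile L2 s"
proof -
  interpret L1: cumulative_hazard L1 H1 by fact
  interpret L2: cumulative_hazard L2 H2 by fact
  define p1 p2 q2 where "p1 = quantile L1 s" and "p2 = quantile L2 s" and "q2 = quantile L2 t"
  have pos: "0 < p1" "0 < p2" using \<open>0 < s\<close> by (auto simp: p1_def p2_def intro: L1.quantile_pos L2.quantile_pos)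
  have "p1 \<le> p2"
    unfolding p1_def using cumulative_hazard_le[OF assms(1-3), of p2] pos
    by (intro L1.quantile_le \<open>0 < s\<close>) (simp add: p2_def L2.at_quantile[OF \<open>0 < s\<close>])
  have "p2 \<le> q2"
    unfolding p2_def q2_def using \<open>0 < s\<close> \<open>s \<le> t\<close> by (intro L2.quantile_le) (simp_all add: L2.at_quantile)
  \<comment> \<open>Started at their \<open>s\<close>-quantiles \<open>p1 \<le> p2\<close>, \<open>L1\<close> grows at rate
    \<open>H1 (p1 + u) \<ge> H1 (p2 + u) \<ge> H2 (p2 + u)\<close>, hence at least as fast as \<open>L2\<close>.\<close>
  define E where "E u = L1 (p1 + u) - L2 (p2 + u)" for u
  have "E 0 \<le> E (q2 - p2)"
  proof (rule DERIV_nonneg_imp_increasing_open[of 0 "q2 - p2" E])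
    fix u assume "0 < u" "u < q2 - p2"
    then have u: "0 < p1 + u" "0 < p2 + u" using pos by auto
    have "(E has_real_derivative H1 (p1 + u) - H2 (p2 + u)) (at u)"
      unfolding E_def using u
      by (auto intro!: derivative_eq_intros DERIV_chain2[of L1] DERIV_chain2[of L2]
          L1.has_derivative L2.has_derivative)
    moreover have "H1 (p2 + u) \<le> H1 (p1 + u)"
      using u \<open>p1 \<le> p2\<close> by (intro monotone_onD[OF H1_anti]) auto
    ultimately show "\<exists>y. (E has_real_derivative y) (at u) \<and> 0 \<le> y"
      using le u by force
  qed (use \<open>p2 \<le> q2\<close> in \<open>auto simp: E_def intro!: continuous_on_diff
      continuous_on_compose2[OF L1.continuous] continuous_on_compose2[OF L2.continuous] continuous_intros\<close>)
  then have "t \<le> L1 (p1 + (q2 - p2))"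
    using \<open>0 < s\<close> \<open>s \<le> t\<close> by (simp add: E_def p1_def p2_def q2_def L1.at_quantile L2.at_quantile)
  then have "quantile L1 t \<le> p1 + (q2 - p2)"
    using \<open>0 < s\<close> \<open>s \<le> t\<close> by (intro L1.quantile_le) auto
  then show ?thesis unfolding p1_def p2_def q2_def by simp
qed

lemma hr_le_disp_le_of_hazard_le:
  assumes "cumulative_hazard L1 H1" "cumulative_hazard L2 H2"
    and cdf1: "cdf D1 = (\<lambda>x. 1 - exp (- L1 x))" and cdf2: "cdf D2 = (\<lambda>x. 1 - exp (- L2 x))"
    and le: "\<forall>x>0. H2 x \<le> H1 x"
  shows "hr_le D1 D2" and "antimono_on {0<..} H1 \<Longrightarrow> disp_le D1 D2"
proof -
  interpret L1: cumulative_hazard L1 H1 by fact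
  interpret L2: cumulative_hazard L2 H2 by fact
  show "hr_le D1 D2"
    unfolding hr_le_def cdf1 cdf2
    using le by (simp add: L1.hazard_rate_one_minus_exp L2.hazard_rate_one_minus_exp)
  assume "antimono_on {0<..} H1"
  show "disp_le D1 D2"
    unfolding disp_le_def cdf1 cdf2
  proof (intro allI impI)
    fix a b :: real assume "0 < a" "a \<le> b" "b < 1"
    then show "quantile (\<lambda>x. 1 - exp (- L1 x)) b - quantile (\<lambda>x. 1 - exp (- L1 x)) a
        \<le> quantile (\<lambda>x. 1 - exp (- L2 x)) b - quantile (\<lambda>x. 1 - exp (- L2 x)) a"
      using quantile_spacing_le[OF assms(1,2) le \<open>antimono_on {0<..} H1\<close>, of "- ln (1 - a)" "- ln (1 - b)"]
      by (simp add: L1.quantile_one_minus_exp L2.quantile_one_minus_exp)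
  qed
qed

section \<open>The scale family of the baseline distribution\<close>

lemma (in prob_space) cdf_min_rv:
  assumes "n \<ge> 1" and rv: "\<forall>i<n. X i \<in> borel_measurable M"
    and indep: "indep_vars (\<lambda>_. borel) X {..<n}"
  shows "cdf (distr M borel (min_rv n X)) x = 1 - (\<Prod>i<n. 1 - cdf (distr M borel (X i)) x)"
proof -
  have ne: "{..<n} \<noteq> {}" using \<open>n \<ge> 1\<close> by (simp add: lessThan_empty_iff)
  define A where "A i = X i -` {x<..} \<inter> space M" for i
  have prob_A: "prob (A i) = 1 - cdf (distr M borel (X i)) x" if "i < n" for i
  proof -
    have "A i = space M - (X i -` {..x} \<inter> space M)" unfolding A_def by auto
    then show ?thesis
      using rv that by (simp add: prob_compl[OF measurable_sets[of _ M borel]] cdf_def2 measure_distr)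
  qed
  have "min_rv n X \<omega> \<le> x \<longleftrightarrow> (\<exists>i<n. X i \<omega> \<le> x)" for \<omega>
    using ne by (auto simp: min_rv_def Min_le_iff)
  then have preimage: "min_rv n X -` {..x} \<inter> space M = space M - (\<Inter>i<n. A i)"
    by (auto simp: A_def not_less) (meson lessThan_iff not_less)
  have min_meas: "min_rv n X \<in> borel_measurable M"
    unfolding min_rv_def using rv by (intro borel_measurable_Min) auto
  have "A i \<in> events" if "i < n" for i
    unfolding A_def using rv that by (auto intro: measurable_sets)
  then have "(\<Inter>i<n. A i) \<in> events"
    using ne by (intro sets.finite_INT) auto
  then have "cdf (distr M borel (min_rv n X)) x = 1 - prob (\<Inter>i<n. A i)"
    using preimage min_meas by (simp add: cdf_def2 measure_distr prob_compl)
  also have "prob (\<Inter>i<n. A i) = (\<Prod>i<n. prob (A i))"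
  proof (rule indep_setsD)
    show "indep_sets (\<lambda>i. {X i -` B \<inter> space M | B. B \<in> sets borel}) {..<n}"
      using indep unfolding indep_vars_def2 by simp
    show "\<forall>i\<in>{..<n}. A i \<in> {X i -` B \<inter> space M | B. B \<in> sets borel}"
      unfolding A_def by (intro ballI CollectI exI[of _ "{x<..}"]) auto
  qed (use ne in auto)
  finally show ?thesis using prob_A by simp
qed

locale baseline_distribution =
  fixes g G r r' :: "real \<Rightarrow> real"
  assumes g_nonneg: "\<forall>x. 0 \<le> g x"
    and g_zero: "\<forall>x<0. g x = 0"
    and g_int: "integrable lborel g"
    and g_total: "(\<integral>t. g t \<partial>lborel) = 1"
    and G_def: "\<forall>x. G x = (LINT t:{..x}|lborel. g t)"
    and r_def: "\<forall>x\<ge>0. r x = g x / (1 - G x)"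
    and r_deriv: "\<forall>x>0. (r has_real_derivative r' x) (at x)"
    and xr_incr: "mono_on {0<..} (\<lambda>x. x * r x)"
begin

lemma set_integrable_g: "set_integrable lborel A g"
  if "A \<in> sets borel"
  unfolding set_integrable_def using that g_int by (intro integrable_mult_indicator) auto

lemma g_integrable_on: "g integrable_on {a..b}"
  by (rule set_borel_integral_eq_integral(1)[OF set_integrable_g]) simp

lemma G_eq_integral:
  assumes "a \<le> 0" "a \<le> x"
  shows "G x = integral {a..x} g"
proof -
  have "G x = (LINT t:{a..x}|lborel. g t)"
    unfolding G_def[rule_format] set_lebesgue_integral_def
    by (rule Bochner_Integration.integral_cong) (use g_zero assms in \<open>auto simp: indicator_def\<close>)
  also have "\<dots> = integral {a..x} g"
    by (rule set_borel_integral_eq_integral(2)[OF set_integrable_g]) simp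
  finally show ?thesis .
qed

lemma G_nonpos_eq_0: "x \<le> 0 \<Longrightarrow> G x = 0"
  using G_eq_integral[of "x - 1" x] integral_spike[of "{0}" "{x - 1..x}" "\<lambda>_. 0" g] g_zero
  by fastforce

lemma G_nonneg: "0 \<le> G x"
proof (cases "x \<le> 0")
  case False
  then show ?thesis
    using G_eq_integral[of 0 x] g_nonneg by (auto intro: integral_nonneg[OF g_integrable_on])
qed (simp add: G_nonpos_eq_0)

lemma G_le_1: "G x \<le> 1"
  unfolding G_def[rule_format] set_lebesgue_integral_def g_total[symmetric]
  using g_int g_nonneg by (intro integral_mono integrable_mult_indicator) (auto simp: indicator_def)

lemma G_tendsto_1: "(G \<longlongrightarrow> 1) at_top"
  using tendsto_integral_at_top[of lborel g] g_int
  unfolding g_total G_def[rule_format, abs_def] set_lebesgue_integral_def by simp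

lemma isCont_G: "isCont G x"
proof -
  define a where "a = min x 0 - 1"
  have "continuous_on {a..x + 1} (\<lambda>u. integral {a..u} g)"
    by (rule indefinite_integral_continuous_1[OF g_integrable_on])
  then have "continuous_on {a..x + 1} G"
    by (rule continuous_on_eq) (auto simp: a_def intro!: G_eq_integral[symmetric])
  then show ?thesis
    by (rule continuous_on_interior) (auto simp: a_def)
qed

\<comment> \<open>If \<open>G y = 1\<close> for some \<open>y > 0\<close>, then \<open>r y = g y / 0 = 0\<close> (division by zero is \<open>0\<close> in HOL);
  since \<open>x r x\<close> increases, \<open>r\<close> and hence \<open>g\<close> vanish on \<open>(0, y)\<close>, contradicting \<open>G y = 1\<close>.\<close>
lemma G_less_1: "G x < 1"
proof (rule ccontr)
  assume "\<not> G x < 1"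
  then have "G x = 1" using G_le_1[of x] by simp
  define S where "S = {y. G y = 1}"
  have S_pos: "0 < y" if "y \<in> S" for y
    using that G_nonpos_eq_0[of y] unfolding S_def by force
  then have "bdd_below S" by (meson bdd_belowI less_le_not_le)
  moreover have "closed S"
    unfolding S_def using isCont_G
    by (intro closed_Collect_eq continuous_intros) (simp_all add: continuous_at_imp_continuous_on)
  moreover have "S \<noteq> {}" using \<open>G x = 1\<close> unfolding S_def by blast
  ultimately have "Inf S \<in> S" by (intro closed_contains_Inf)
  define y where "y = Inf S"
  have "0 < y" "G y = 1" using S_pos \<open>Inf S \<in> S\<close> unfolding y_def S_def by auto
  then have "r y = 0" using r_def by simp
  have "g t = 0" if t: "0 < t" "t < y" for t
  proof -
    have "G t < 1"
      using t cInf_lower[OF _ \<open>bdd_below S\<close>, of t] G_le_1[of t] unfolding y_def S_def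
      by (force simp: less_le)
    have "t * r t \<le> y * r y" using t by (intro mono_onD[OF xr_incr]) auto
    then have "r t \<le> 0" using t \<open>r y = 0\<close> by (simp add: mult_le_0_iff)
    then show ?thesis
      using r_def t \<open>G t < 1\<close> g_nonneg by (auto simp: divide_le_0_iff intro: order_antisym)
  qed
  then have "integral {0..y} g = integral {0..y} (\<lambda>_. 0::real)"
    by (intro integral_spike[of "{0, y}"]) simp_all
  then have "G y = 0" using G_eq_integral[of 0 y] \<open>0 < y\<close> by simp
  then show False using \<open>G y = 1\<close> by simp
qed

lemma g_eq_hazard_survival: "0 \<le> x \<Longrightarrow> g x = r x * (1 - G x)"
  using r_def G_less_1[of x] by simp

lemma G_has_derivative:
  assumes "0 < x"
  shows "(G has_real_derivative g x) (at x)"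
proof -
  have "\<forall>\<^sub>F y in nhds x. y \<in> {0<..}"
    using assms by (intro eventually_nhds_in_open) auto
  then have "\<forall>\<^sub>F y in nhds x. r y * (1 - G y) = g y"
    by eventually_elim (simp add: g_eq_hazard_survival)
  moreover have "isCont (\<lambda>y. r y * (1 - G y)) x"
    using DERIV_isCont[OF r_deriv[rule_format, OF assms]] isCont_G by (intro continuous_intros)
  ultimately have "isCont g x" by (simp only: isCont_cong)
  then have "((\<lambda>u. integral {-1..u} g) has_vector_derivative g x) (at x within {-1..x + 1} - {})"
  proof (intro integral_has_vector_derivative_continuous_at[OF g_integrable_on])
    show "continuous (at x within {-1..x + 1} - {}) g" if "isCont g x"
      using that by (rule continuous_at_imp_continuous_within)
  qed (use assms in simp_all)
  moreover have "at x within {-1..x + 1} = at x"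
    using assms by (intro at_within_interior) simp
  ultimately have "((\<lambda>u. integral {-1..u} g) has_real_derivative g x) (at x)"
    by (simp add: has_real_derivative_iff_has_vector_derivative)
  then show ?thesis
  proof (rule has_field_derivative_transform_within_open[of _ _ _ "{-1<..<x + 1}"])
    show "\<And>y. y \<in> {-1<..<x + 1} \<Longrightarrow> integral {-1..y} g = G y"
      using G_eq_integral[of "-1"] by simp
  qed (use assms in simp_all)
qed

definition cum_hazard :: "real \<Rightarrow> real" where
  "cum_hazard x = - ln (1 - G x)"

lemma exp_neg_cum_hazard: "exp (- cum_hazard x) = 1 - G x"
  unfolding cum_hazard_def using G_less_1[of x] by simp

lemma cum_hazard_has_derivative:
  assumes "0 < x"
  shows "(cum_hazard has_real_derivative r x) (at x)"
proof -
  have "(cum_hazard has_real_derivative g x / (1 - G x)) (at x)"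
    unfolding cum_hazard_def[abs_def] using G_less_1[of x]
    by (auto intro!: derivative_eq_intros G_has_derivative[OF assms] simp: field_simps)
  then show ?thesis using r_def assms by simp
qed

lemma cum_hazard_unbounded: "\<exists>x. s \<le> cum_hazard x"
proof -
  have "\<forall>\<^sub>F x in at_top. 1 - exp (- s) < G x"
    using G_tendsto_1 by (rule order_tendstoD) simp
  then obtain x where "1 - exp (- s) < G x" by (auto dest: eventually_happens)
  then have "ln (1 - G x) < - s"
    using G_less_1[of x] by (metis diff_gt_0_iff_gt diff_less_eq add.commute ln_exp ln_less_cancel_iff exp_gt_zero)
  then show ?thesis unfolding cum_hazard_def by (intro exI[of _ x]) simp
qed

definition min_cum_hazard :: "nat \<Rightarrow> (nat \<Rightarrow> real) \<Rightarrow> real \<Rightarrow> real" where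
  "min_cum_hazard n l x = (\<Sum>i<n. cum_hazard (l i * x))"

definition min_hazard :: "nat \<Rightarrow> (nat \<Rightarrow> real) \<Rightarrow> real \<Rightarrow> real" where
  "min_hazard n l x = (\<Sum>i<n. l i * r (l i * x))"

lemma cumulative_hazard_min:
  assumes "n \<ge> 1" and l_pos: "\<forall>i<n. 0 < l i"
  shows "cumulative_hazard (min_cum_hazard n l) (min_hazard n l)"
proof
  have "isCont cum_hazard x" for x
    unfolding cum_hazard_def using isCont_G[of x] G_less_1[of x] by (intro continuous_intros) auto
  then show "continuous_on UNIV (min_cum_hazard n l)"
    unfolding min_cum_hazard_def[abs_def]
    by (intro continuous_at_imp_continuous_on ballI continuous_intros
        continuous_at_compose[OF _ \<open>isCont cum_hazard _\<close>, unfolded o_def])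
  show "min_cum_hazard n l x = 0" if "x \<le> 0" for x
    unfolding min_cum_hazard_def cum_hazard_def using that l_pos
    by (intro sum.neutral) (auto simp: G_nonpos_eq_0 mult_nonneg_nonpos less_imp_le)
  show "\<exists>x. s \<le> min_cum_hazard n l x" for s
  proof -
    obtain y where "s \<le> cum_hazard y" using cum_hazard_unbounded by blast
    moreover have "cum_hazard (l 0 * (y / l 0)) \<le> min_cum_hazard n l (y / l 0)"
      unfolding min_cum_hazard_def using \<open>n \<ge> 1\<close> G_nonneg G_less_1
      by (intro member_le_sum) (auto simp: cum_hazard_def)
    ultimately show ?thesis using l_pos \<open>n \<ge> 1\<close> by (intro exI[of _ "y / l 0"]) auto
  qed
  show "(min_cum_hazard n l has_real_derivative min_hazard n l x) (at x)" if "0 < x" for x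
  proof -
    have "((\<lambda>x. cum_hazard (l i * x)) has_real_derivative r (l i * x) * l i) (at x)" if "i < n" for i
      using that \<open>0 < x\<close> l_pos
      by (intro DERIV_chain2[OF cum_hazard_has_derivative] derivative_eq_intros) auto
    then show ?thesis
      unfolding min_cum_hazard_def[abs_def] min_hazard_def
      by (subst mult.commute) (intro DERIV_sum, simp)
  qed
qed

lemma antimono_min_hazard:
  assumes "\<forall>i<n. 0 < l i" and "antimono_on {0<..} r"
  shows "antimono_on {0<..} (min_hazard n l)"
  unfolding min_hazard_def using assms
  by (intro monotone_onI sum_mono mult_left_mono monotone_onD[OF assms(2)]) auto

lemma cdf_min_rv_eq:
  assumes "prob_space M" "n \<ge> 1" "\<forall>i<n. X i \<in> borel_measurable M"
    and "prob_space.indep_vars M (\<lambda>_. borel) X {..<n}"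
    and "\<forall>i<n. \<forall>x. cdf (distr M borel (X i)) x = G (l i * x)"
  shows "cdf (distr M borel (min_rv n X)) = (\<lambda>x. 1 - exp (- min_cum_hazard n l x))"
proof
  fix x
  interpret prob_space M by fact
  show "cdf (distr M borel (min_rv n X)) x = 1 - exp (- min_cum_hazard n l x)"
    using assms by (simp add: cdf_min_rv min_cum_hazard_def exp_sum exp_neg_cum_hazard flip: sum_negf)
qed

lemma min_hazard_eq_sum_sorted:
  assumes "0 < x"
  shows "min_hazard n l x
    = (\<Sum>i<n. (sorted_vals n l ! i * x) * r (sorted_vals n l ! i * x)) / x"
  using assms sum_sorted_vals[of "\<lambda>v. (v * x) * r (v * x)" n l]
  by (simp add: min_hazard_def sum_divide_distrib)

lemma xr_has_derivative: "\<forall>u>0. ((\<lambda>u. u * r u) has_real_derivative r u + u * r' u) (at u)"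
  using r_deriv by (auto intro!: derivative_eq_intros)

lemma min_hazard_le_of_prefix_sums_le:
  assumes lam_pos: "\<forall>i<n. 0 < lam i" and lams_pos: "\<forall>i<n. 0 < lams i"
    and anti: "antimono_on {0<..} (\<lambda>x. x\<^sup>2 * r' x)"
    and prefix: "\<forall>j\<in>{1..n}. sum_list (take j (sorted_vals n lam)) \<le> sum_list (take j (sorted_vals n lams))"
    and "0 < x"
  shows "min_hazard n lam x \<le> min_hazard n lams x"
proof -
  define a b where "a i = sorted_vals n lam ! i * x" and "b i = sorted_vals n lams ! i * x" for i
  have "(\<Sum>i<n. a i * r (a i)) \<le> (\<Sum>i<n. b i * r (b i))"
  proof (rule sum_le_of_prefix_sums_le[OF _ _ _ xr_has_derivative xr_incr
        antimono_x_deriv_of_antimono_sq_deriv[OF r_deriv anti]])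
    show "\<forall>i<n. 0 < a i \<and> 0 < b i"
      using sorted_vals_nth_pos[OF lam_pos] sorted_vals_nth_pos[OF lams_pos] \<open>0 < x\<close>
      unfolding a_def b_def by simp
    show "\<forall>i j. i \<le> j \<longrightarrow> j < n \<longrightarrow> b i \<le> b j"
      using sorted_vals_nth_mono \<open>0 < x\<close> unfolding b_def by (simp add: mult_right_mono)
    have "(\<Sum>i<j. sorted_vals n lam ! i) \<le> (\<Sum>i<j. sorted_vals n lams ! i)" if "j \<le> n" for j
      using prefix[rule_format, of j] that
        sum_list_take_sorted_vals[OF that, of lam] sum_list_take_sorted_vals[OF that, of lams]
      by (cases "j = 0") auto
    then show "\<forall>j\<le>n. (\<Sum>i<j. a i) \<le> (\<Sum>i<j. b i)"
      using \<open>0 < x\<close> unfolding a_def b_def by (simp flip: sum_distrib_right add: mult_right_mono)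
  qed
  then show ?thesis
    using \<open>0 < x\<close> by (simp add: min_hazard_eq_sum_sorted a_def b_def divide_right_mono)
qed

lemma min_hazard_le_of_suffix_sums_le:
  assumes lam_pos: "\<forall>i<n. 0 < lam i" and lams_pos: "\<forall>i<n. 0 < lams i"
    and mono: "mono_on {0<..} (\<lambda>x. x\<^sup>2 * r' x)"
    and suffix: "\<forall>j\<in>{1..n}. sum_list (drop (j - 1) (sorted_vals n lams))
                             \<le> sum_list (drop (j - 1) (sorted_vals n lam))"
    and "0 < x"
  shows "min_hazard n lams x \<le> min_hazard n lam x"
proof -
  define a b where "a i = sorted_vals n lam ! i * x" and "b i = sorted_vals n lams ! i * x" for i
  have "(\<Sum>i<n. b i * r (b i)) \<le> (\<Sum>i<n. a i * r (a i))"
  proof (rule sum_le_of_suffix_sums_le[OF _ _ _ xr_has_derivative xr_incr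
        mono_x_deriv_of_mono_sq_deriv[OF r_deriv mono]])
    show "\<forall>i<n. 0 < a i \<and> 0 < b i"
      using sorted_vals_nth_pos[OF lam_pos] sorted_vals_nth_pos[OF lams_pos] \<open>0 < x\<close>
      unfolding a_def b_def by simp
    show "\<forall>i j. i \<le> j \<longrightarrow> j < n \<longrightarrow> b i \<le> b j"
      using sorted_vals_nth_mono \<open>0 < x\<close> unfolding b_def by (simp add: mult_right_mono)
    have "(\<Sum>i\<in>{j..<n}. sorted_vals n lams ! i) \<le> (\<Sum>i\<in>{j..<n}. sorted_vals n lam ! i)" if "j < n" for j
      using suffix[rule_format, of "Suc j"] that
        sum_list_drop_sorted_vals[of j n lam] sum_list_drop_sorted_vals[of j n lams]
      by simp
    then show "\<forall>j<n. (\<Sum>i\<in>{j..<n}. b i) \<le> (\<Sum>i\<in>{j..<n}. a i)"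
      using \<open>0 < x\<close> unfolding a_def b_def by (simp flip: sum_distrib_right add: mult_right_mono)
  qed
  then show ?thesis
    using \<open>0 < x\<close> by (simp add: min_hazard_eq_sum_sorted a_def b_def divide_right_mono)
qed

end

theorem mainTheorem3:
  fixes G g r r' :: "real \<Rightarrow> real"
    and n :: nat
    and lam lams :: "nat \<Rightarrow> real"
    and M :: "'a measure" and N :: "'b measure"
    and X :: "nat \<Rightarrow> 'a \<Rightarrow> real" and Xs :: "nat \<Rightarrow> 'b \<Rightarrow> real"
  assumes n_pos: "n \<ge> 1"
    and g_meas: "g \<in> borel_measurable borel"
    and g_nonneg: "\<forall>x. 0 \<le> g x"
    and g_zero: "\<forall>x<0. g x = 0"
    and g_int: "integrable lborel g"
    and g_total: "(\<integral>t. g t \<partial>lborel) = 1"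
    and G_def: "\<forall>x. G x = (LINT t:{..x}|lborel. g t)"
    and r_def: "\<forall>x\<ge>0. r x = g x / (1 - G x)"
    and r_deriv: "\<forall>x>0. (r has_real_derivative r' x) (at x)"
    and xr_incr: "mono_on {0<..} (\<lambda>x. x * r x)"
    and lam_pos: "\<forall>i<n. 0 < lam i"
    and lams_pos: "\<forall>i<n. 0 < lams i"
    and M_prob: "prob_space M"
    and N_prob: "prob_space N"
    and X_rv: "\<forall>i<n. X i \<in> borel_measurable M"
    and Xs_rv: "\<forall>i<n. Xs i \<in> borel_measurable N"
    and X_nonneg: "\<forall>i<n. \<forall>\<omega>\<in>space M. 0 \<le> X i \<omega>"
    and Xs_nonneg: "\<forall>i<n. \<forall>\<omega>\<in>space N. 0 \<le> Xs i \<omega>"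
    and X_indep: "prob_space.indep_vars M (\<lambda>_. borel) X {..<n}"
    and Xs_indep: "prob_space.indep_vars N (\<lambda>_. borel) Xs {..<n}"
    and X_distr: "\<forall>i<n. \<forall>x. cdf (distr M borel (X i)) x = G (lam i * x)"
    and Xs_distr: "\<forall>i<n. \<forall>x. cdf (distr N borel (Xs i)) x = G (lams i * x)"
  shows
    "((antimono_on {0<..} (\<lambda>x. x\<^sup>2 * r' x) \<and>
       (\<forall>j\<in>{1..n}. sum_list (take j (sorted_vals n lams)) \<ge> sum_list (take j (sorted_vals n lam))))
      \<longrightarrow> hr_le (distr N borel (min_rv n Xs)) (distr M borel (min_rv n X)) \<and>
          (antimono_on {0<..} r \<longrightarrow>
             disp_le (distr N borel (min_rv n Xs)) (distr M borel (min_rv n X))))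
   \<and>
     ((mono_on {0<..} (\<lambda>x. x\<^sup>2 * r' x) \<and>
       (\<forall>j\<in>{1..n}. sum_list (drop (j - 1) (sorted_vals n lams)) \<le> sum_list (drop (j - 1) (sorted_vals n lam))))
      \<longrightarrow> hr_le (distr M borel (min_rv n X)) (distr N borel (min_rv n Xs)) \<and>
          (antimono_on {0<..} r \<longrightarrow>
             disp_le (distr M borel (min_rv n X)) (distr N borel (min_rv n Xs))))"
proof -
  interpret baseline_distribution g G r r'
    using g_nonneg g_zero g_int g_total G_def r_def r_deriv xr_incr by unfold_locales
  note cdf_X = cdf_min_rv_eq[OF M_prob n_pos X_rv X_indep X_distr]
  note cdf_Xs = cdf_min_rv_eq[OF N_prob n_pos Xs_rv Xs_indep Xs_distr]
  note haz_X = cumulative_hazard_min[OF n_pos lam_pos]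
  note haz_Xs = cumulative_hazard_min[OF n_pos lams_pos]
  show ?thesis
  proof (intro conjI impI; elim conjE)
    assume "antimono_on {0<..} (\<lambda>x. x\<^sup>2 * r' x)"
      "\<forall>j\<in>{1..n}. sum_list (take j (sorted_vals n lams)) \<ge> sum_list (take j (sorted_vals n lam))"
    then have "\<forall>x>0. min_hazard n lam x \<le> min_hazard n lams x"
      using min_hazard_le_of_prefix_sums_le[OF lam_pos lams_pos] by blast
    note orders = hr_le_disp_le_of_hazard_le[OF haz_Xs haz_X cdf_Xs cdf_X this]
    show "hr_le (distr N borel (min_rv n Xs)) (distr M borel (min_rv n X))" by (fact orders)
    show "disp_le (distr N borel (min_rv n Xs)) (distr M borel (min_rv n X))"
      if "antimono_on {0<..} r" using that by (intro orders antimono_min_hazard lams_pos)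
  next
    assume "mono_on {0<..} (\<lambda>x. x\<^sup>2 * r' x)"
      "\<forall>j\<in>{1..n}. sum_list (drop (j - 1) (sorted_vals n lams)) \<le> sum_list (drop (j - 1) (sorted_vals n lam))"
    then have "\<forall>x>0. min_hazard n lams x \<le> min_hazard n lam x"
      using min_hazard_le_of_suffix_sums_le[OF lam_pos lams_pos] by blast
    note orders = hr_le_disp_le_of_hazard_le[OF haz_X haz_Xs cdf_X cdf_Xs this]
    show "hr_le (distr M borel (min_rv n X)) (distr N borel (min_rv n Xs))" by (fact orders)
    show "disp_le (distr M borel (min_rv n X)) (distr N borel (min_rv n Xs))"
      if "antimono_on {0<..} r" using that by (intro orders antimono_min_hazard lam_pos)
  qed
qed

end
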